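(* Let $m>n$, $1<p<\infty$, $Y^m=[0,1)^m$, and let $\mathbf{R}\in\mathbb{R}^{m\times n}$ satisfy $\mathbf{R}^*k\neq0$ for all $k\in\mathbb{Z}^m\setminus\{0\}$. Let $w_0\in L^p_\#(Y^m;\mathbb{R}^n)$ satisfy $\int_{Y^m}w_0(y)\cdot\psi(y)\,dy=0$ for every $\psi\in C^\infty_\#(Y^m;\mathbb{R}^n)$ with $\sum_{l=1}^n\sum_{\tau=1}^m\mathbf{R}_{\tau l}\,\partial\psi_l/\partial y_\tau=0$ in $Y^m$. Then $w_0\in\mathcal{G}^p_{\mathbf{R}}$.
   Context: $L^p_\#(Y^m;\mathbb{R}^n)$ denotes the $Y^m$-periodic functions in $L^p_{\rm loc}(\mathbb{R}^m;\mathbb{R}^n)$; $C^\infty_\#(Y^m;\mathbb{R}^n)$ the smooth $Y^m$-periodic ones; $\mathbf{R}^*$ is the transpose. $\mathcal{G}^p_{\mathbf{R}}:=\{w\in L^p_\#(Y^m;\mathbb{R}^n):\ \hat w_k=\lambda_k\mathbf{R}^*k$ for all $k\in\mathbb{Z}^m$, for some $\{\lambda_k\}_{k\in\mathbb{Z}^m}\subset\mathbb{C}$ with $\lambda_0=0\}$, where $\hat w_k:=\int_{Y^m}w(y)e^{-2\pi ik\cdot y}\,dy$. *)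

theory Defs
  imports "HOL-Analysis.Analysis"
begin

definition unit_cell :: "(real^'m) set" where
  "unit_cell = {y. \<forall>i. 0 \<le> y $ i \<and> y $ i < 1}"

definition int_lattice :: "(real^'m) set" where
  "int_lattice = {k. \<forall>i. k $ i \<in> \<int>}"

definition periodic1 :: "(real^'m \<Rightarrow> 'b) \<Rightarrow> bool" where
  "periodic1 f \<longleftrightarrow> (\<forall>y i. f (y + axis i 1) = f y)"

definition Lp_per :: "real \<Rightarrow> (real^'m \<Rightarrow> real^'n) set" where
  "Lp_per p = {w. periodic1 w \<and> w \<in> borel_measurable lebesgue \<and>
      set_integrable lebesgue unit_cell (\<lambda>y. norm (w y) powr p)}"

definition partial_deriv :: "(real^'m \<Rightarrow> real^'n) \<Rightarrow> 'm \<Rightarrow> real^'m \<Rightarrow> real^'n" where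
  "partial_deriv f i x = frechet_derivative f (at x) (axis i 1)"

coinductive smooth_fun :: "(real^'m \<Rightarrow> real^'n) \<Rightarrow> bool" where
  "(\<forall>x. f differentiable (at x)) \<Longrightarrow> (\<forall>i. smooth_fun (partial_deriv f i)) \<Longrightarrow> smooth_fun f"

definition Cinf_per :: "(real^'m \<Rightarrow> real^'n) set" where
  "Cinf_per = {\<psi>. smooth_fun \<psi> \<and> periodic1 \<psi>}"

definition fourier_coeff :: "(real^'m \<Rightarrow> real^'n) \<Rightarrow> real^'m \<Rightarrow> complex^'n" where
  "fourier_coeff w k = (\<chi> l. LINT y:unit_cell|lebesgue.
      complex_of_real (w y $ l) * cis (- 2 * pi * (k \<bullet> y)))"

definition G_space :: "real \<Rightarrow> real^'n^'m \<Rightarrow> (real^'m \<Rightarrow> real^'n) set" where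
  "G_space p R = {w \<in> Lp_per p. \<exists>lam::real^'m \<Rightarrow> complex. lam 0 = 0 \<and>
      (\<forall>k\<in>int_lattice. fourier_coeff w k =
          (\<chi> l. lam k * complex_of_real ((transpose R *v k) $ l)))}"

end

theory Submission
  imports Defs
begin

text \<open>
  Test the hypothesis on w0 with the periodic plane waves
  \<psi>(y) = cos(2\<pi> k\<cdot>y) a + sin(2\<pi> k\<cdot>y) b, k \<in> \<int>^m.  Their R-divergence is
  2\<pi>(cos(2\<pi> k\<cdot>y) (R^T k)\<cdot>b - sin(2\<pi> k\<cdot>y) (R^T k)\<cdot>a), so \<psi> is admissible whenever
  a and b are orthogonal to R^T k, and then \<integral> w0\<cdot>\<psi> = C_k\<cdot>a + S_k\<cdot>b for the cosine
  and sine coefficients C_k, S_k of w0.  Hence C_k and S_k are orthogonal to (R^T k)^\<perp>,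
  i.e. parallel to R^T k, and so is the Fourier coefficient C_k - i S_k.  For k = 0 this
  forces the mean of w0 to vanish.
\<close>

lemma sets_lebesgue_unit_cell: "(unit_cell :: (real^'m) set) \<in> sets lebesgue"
proof -
  have "Measurable.pred borel (\<lambda>y::real^'m. \<forall>i\<in>UNIV. 0 \<le> y $ i \<and> y $ i < 1)"
    by measurable
  then show ?thesis
    unfolding unit_cell_def pred_def by simp
qed

lemma unit_cell_lmeasurable: "(unit_cell :: (real^'m) set) \<in> lmeasurable"
  by (rule fmeasurableI2[OF lmeasurable_cbox[of 0 1]])
     (auto simp: unit_cell_def mem_box_cart less_imp_le sets_lebesgue_unit_cell)

lemma le_one_plus_powr:
  fixes x p :: real
  assumes "0 \<le> x" "1 \<le> p"
  shows "x \<le> 1 + x powr p"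
proof (cases "x \<le> 1")
  case False
  then have "x powr 1 \<le> x powr p"
    using assms by (intro powr_mono) auto
  then show ?thesis by simp
qed (simp add: add_increasing2)

lemma Lp_per_set_integrable:
  assumes "w \<in> Lp_per p" "1 \<le> p"
  shows "set_integrable lebesgue unit_cell w"
proof -
  have meas: "w \<in> borel_measurable lebesgue"
    and powr: "set_integrable lebesgue unit_cell (\<lambda>y. norm (w y) powr p)"
    using assms(1) unfolding Lp_per_def by auto
  have "set_integrable lebesgue unit_cell (\<lambda>y. 1 + norm (w y) powr p)"
    using absolutely_integrable_on_const[OF unit_cell_lmeasurable] powr by (rule set_integral_add)
  then show ?thesis
  proof (rule set_integrable_bound)
    show "set_borel_measurable lebesgue unit_cell w"
      using meas sets_lebesgue_unit_cell unfolding set_borel_measurable_def by measurable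
    show "AE y in lebesgue. y \<in> unit_cell \<longrightarrow> norm (w y) \<le> norm (1 + norm (w y) powr p)"
      using assms(2) by (intro AE_I2) (simp add: le_one_plus_powr)
  qed
qed

lemma set_integrable_bounded_mult_component:
  fixes w :: "'a \<Rightarrow> real^'n" and c :: "'a \<Rightarrow> real"
  assumes "set_integrable M A w" "w \<in> borel_measurable M" "A \<in> sets M"
    and "c \<in> borel_measurable M" "\<And>x. \<bar>c x\<bar> \<le> 1"
  shows "set_integrable M A (\<lambda>x. c x * w x $ l)"
  using assms(1)
proof (rule set_integrable_bound)
  show "set_borel_measurable M A (\<lambda>x. c x * w x $ l)"
    using assms(3,4) measurable_compose[OF assms(2) borel_measurable_nth]
    unfolding set_borel_measurable_def by measurable
  have "\<bar>c x * w x $ l\<bar> \<le> norm (w x)" for x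
    using mult_mono[OF assms(5) component_le_norm_cart] by (simp add: abs_mult)
  then show "AE x in M. x \<in> A \<longrightarrow> norm (c x * w x $ l) \<le> norm (w x)"
    by simp
qed

lemma set_integral_sum:
  fixes f :: "'i \<Rightarrow> 'a \<Rightarrow> 'b::{banach, second_countable_topology}"
  assumes "\<And>i. i \<in> I \<Longrightarrow> set_integrable M A (f i)"
  shows "(LINT x:A|M. \<Sum>i\<in>I. f i x) = (\<Sum>i\<in>I. LINT x:A|M. f i x)"
  using assms unfolding set_integrable_def set_lebesgue_integral_def
  by (simp add: scaleR_sum_right)

definition plane_wave :: "real^'m \<Rightarrow> real^'n \<Rightarrow> real^'n \<Rightarrow> real^'m \<Rightarrow> real^'n" where
  "plane_wave k a b y = cos (2*pi*(k \<bullet> y)) *\<^sub>R a + sin (2*pi*(k \<bullet> y)) *\<^sub>R b"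

lemma has_derivative_plane_wave:
  "(plane_wave k a b has_derivative
     (\<lambda>h. (2*pi*(k \<bullet> h)) *\<^sub>R (cos (2*pi*(k \<bullet> x)) *\<^sub>R b - sin (2*pi*(k \<bullet> x)) *\<^sub>R a))) (at x)"
  unfolding plane_wave_def
  by (rule derivative_eq_intros refl | simp)+ (simp add: fun_eq_iff algebra_simps)

lemma partial_deriv_plane_wave:
  "partial_deriv (plane_wave k a b) i = plane_wave k ((2*pi*k$i) *\<^sub>R b) (- (2*pi*k$i) *\<^sub>R a)"
proof
  fix y
  show "partial_deriv (plane_wave k a b) i y = plane_wave k ((2*pi*k$i) *\<^sub>R b) (- (2*pi*k$i) *\<^sub>R a) y"
    unfolding partial_deriv_def frechet_derivative_at[OF has_derivative_plane_wave, symmetric]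
    by (simp add: plane_wave_def inner_axis algebra_simps)
qed

lemma smooth_fun_plane_wave:
  fixes k :: "real^'m" and a b :: "real^'n"
  shows "smooth_fun (plane_wave k a b)"
proof -
  have "\<exists>a b. f = plane_wave k a b \<Longrightarrow> smooth_fun f" for f :: "real^'m \<Rightarrow> real^'n"
  proof (coinduction arbitrary: f rule: smooth_fun.coinduct)
    case (smooth_fun f)
    then show ?case
      using has_derivative_plane_wave partial_deriv_plane_wave by (metis differentiableI)
  qed
  then show ?thesis by blast
qed

lemma periodic1_plane_wave:
  assumes "k \<in> int_lattice"
  shows "periodic1 (plane_wave k a b)"
  unfolding periodic1_def
proof (intro allI)
  fix y i
  obtain n where n: "k $ i = of_int n"
    using assms unfolding int_lattice_def by (auto elim: Ints_cases)
  have "2*pi*(k \<bullet> (y + axis i 1)) = 2*pi*(k \<bullet> y) + of_int n * (2 * of_real pi)"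
    by (simp add: inner_axis n algebra_simps)
  then show "plane_wave k a b (y + axis i 1) = plane_wave k a b y"
    unfolding plane_wave_def by (simp only: cos.plus_of_int sin.plus_of_int)
qed

definition R_divergence :: "real^'n^'m \<Rightarrow> (real^'m \<Rightarrow> real^'n) \<Rightarrow> real^'m \<Rightarrow> real" where
  "R_divergence R \<psi> y = (\<Sum>l\<in>UNIV. \<Sum>\<tau>\<in>UNIV. R $ \<tau> $ l * partial_deriv \<psi> \<tau> y $ l)"

lemma R_divergence_plane_wave:
  "R_divergence R (plane_wave k a b) y =
     2*pi * (cos (2*pi*(k \<bullet> y)) * ((transpose R *v k) \<bullet> b) - sin (2*pi*(k \<bullet> y)) * ((transpose R *v k) \<bullet> a))"
proof -
  let ?c = "cos (2*pi*(k \<bullet> y))" and ?s = "sin (2*pi*(k \<bullet> y))" and ?v = "transpose R *v k"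
  have "(\<Sum>\<tau>\<in>UNIV. R $ \<tau> $ l * partial_deriv (plane_wave k a b) \<tau> y $ l) =
      2*pi * (?c * b $ l - ?s * a $ l) * ?v $ l" for l
    by (simp add: partial_deriv_plane_wave plane_wave_def matrix_vector_mult_def transpose_def
        sum_distrib_left sum_subtractf algebra_simps)
  then have "R_divergence R (plane_wave k a b) y = (\<Sum>l\<in>UNIV. 2*pi * (?c * b $ l - ?s * a $ l) * ?v $ l)"
    by (simp add: R_divergence_def)
  also have "\<dots> = 2*pi * (?c * (?v \<bullet> b) - ?s * (?v \<bullet> a))"
    unfolding inner_vec_def[of ?v a] inner_vec_def[of ?v b]
    by (simp add: sum_distrib_left sum_subtractf algebra_simps)
  finally show ?thesis .
qed

lemma eq_scaled_if_orthogonal_to_perp: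
  fixes x v :: "'a::real_inner"
  assumes "\<And>a. a \<bullet> v = 0 \<Longrightarrow> x \<bullet> a = 0"
  shows "x = ((x \<bullet> v) / (v \<bullet> v)) *\<^sub>R v"
proof -
  define a where "a = x - ((x \<bullet> v) / (v \<bullet> v)) *\<^sub>R v"
  have "a \<bullet> v = 0"
    by (cases "v = 0") (simp_all add: a_def inner_diff_left)
  then have "a \<bullet> a = 0"
    using assms[of a] by (simp add: a_def inner_diff_left inner_diff_right inner_commute)
  then show ?thesis
    by (simp add: a_def)
qed

lemma set_integrable_complex_of_real:
  "set_integrable M A f \<Longrightarrow> set_integrable M A (\<lambda>x. complex_of_real (f x))"
  unfolding set_integrable_def
  by (simp add: scaleR_conv_of_real complex_of_real_integrable_eq flip: of_real_mult)

definition cos_coeff :: "(real^'m \<Rightarrow> real^'n) \<Rightarrow> real^'m \<Rightarrow> real^'n" where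
  "cos_coeff w k = (\<chi> l. LINT y:unit_cell|lebesgue. cos (2*pi*(k \<bullet> y)) * w y $ l)"

definition sin_coeff :: "(real^'m \<Rightarrow> real^'n) \<Rightarrow> real^'m \<Rightarrow> real^'n" where
  "sin_coeff w k = (\<chi> l. LINT y:unit_cell|lebesgue. sin (2*pi*(k \<bullet> y)) * w y $ l)"

lemma set_integrable_cos_sin_component:
  fixes w :: "real^'m \<Rightarrow> real^'n"
  assumes "set_integrable lebesgue unit_cell w" "w \<in> borel_measurable lebesgue"
  shows "set_integrable lebesgue unit_cell (\<lambda>y. cos (2*pi*(k \<bullet> y)) * w y $ l)"
    and "set_integrable lebesgue unit_cell (\<lambda>y. sin (2*pi*(k \<bullet> y)) * w y $ l)"
proof -
  have "(\<lambda>y. cos (2*pi*(k \<bullet> y))) \<in> borel_measurable lebesgue"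
    and "(\<lambda>y. sin (2*pi*(k \<bullet> y))) \<in> borel_measurable lebesgue"
    by (rule measurable_completion, measurable)+
  then show "set_integrable lebesgue unit_cell (\<lambda>y. cos (2*pi*(k \<bullet> y)) * w y $ l)"
    and "set_integrable lebesgue unit_cell (\<lambda>y. sin (2*pi*(k \<bullet> y)) * w y $ l)"
    by (auto intro: set_integrable_bounded_mult_component[OF assms sets_lebesgue_unit_cell])
qed

lemma fourier_coeff_eq_cos_sin_coeff:
  assumes "set_integrable lebesgue unit_cell w" "w \<in> borel_measurable lebesgue"
  shows "fourier_coeff w k $ l = Complex (cos_coeff w k $ l) (- sin_coeff w k $ l)"
proof -
  note integrable = set_integrable_cos_sin_component[OF assms, THEN set_integrable_complex_of_real]
  have "(\<lambda>y. complex_of_real (w y $ l) * cis (- 2 * pi * (k \<bullet> y))) =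
      (\<lambda>y. complex_of_real (cos (2*pi*(k \<bullet> y)) * w y $ l)
         - \<i> * complex_of_real (sin (2*pi*(k \<bullet> y)) * w y $ l))"
    by (simp add: fun_eq_iff complex_eq_iff)
  then have "fourier_coeff w k $ l =
      (CLINT y:unit_cell|lebesgue. complex_of_real (cos (2*pi*(k \<bullet> y)) * w y $ l)
         - \<i> * complex_of_real (sin (2*pi*(k \<bullet> y)) * w y $ l))"
    by (simp only: fourier_coeff_def vec_lambda_beta)
  also have "\<dots> = of_real (cos_coeff w k $ l) - \<i> * of_real (sin_coeff w k $ l)"
    by (simp only: set_integral_diff(2) set_integrable_mult_right set_integral_mult_right integrable
        set_integral_complex_of_real cos_coeff_def sin_coeff_def vec_lambda_beta)
  finally show ?thesis
    by (simp add: complex_eq_iff)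
qed

lemma integral_inner_plane_wave:
  assumes "set_integrable lebesgue unit_cell w" "w \<in> borel_measurable lebesgue"
  shows "(LINT y:unit_cell|lebesgue. w y \<bullet> plane_wave k a b y) = cos_coeff w k \<bullet> a + sin_coeff w k \<bullet> b"
proof -
  note integrable = set_integrable_cos_sin_component[OF assms]
  have "w y \<bullet> plane_wave k a b y =
      (\<Sum>l\<in>UNIV. a $ l * (cos (2*pi*(k \<bullet> y)) * w y $ l) + b $ l * (sin (2*pi*(k \<bullet> y)) * w y $ l))" for y
    by (simp add: plane_wave_def inner_vec_def sum.distrib algebra_simps)
  then have "(LINT y:unit_cell|lebesgue. w y \<bullet> plane_wave k a b y) =
      (\<Sum>l\<in>UNIV. a $ l * (LINT y:unit_cell|lebesgue. cos (2*pi*(k \<bullet> y)) * w y $ l)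
                + b $ l * (LINT y:unit_cell|lebesgue. sin (2*pi*(k \<bullet> y)) * w y $ l))"
    by (simp add: set_integral_sum integrable)
  also have "\<dots> = cos_coeff w k \<bullet> a + sin_coeff w k \<bullet> b"
    unfolding inner_vec_def[of "cos_coeff w k"] inner_vec_def[of "sin_coeff w k"]
    by (simp add: cos_coeff_def sin_coeff_def sum.distrib mult.commute)
  finally show ?thesis .
qed

definition fourier_multiplier :: "real^'n^'m \<Rightarrow> (real^'m \<Rightarrow> real^'n) \<Rightarrow> real^'m \<Rightarrow> complex" where
  "fourier_multiplier R w k =
     (let v = transpose R *v k in Complex (cos_coeff w k \<bullet> v / (v \<bullet> v)) (- (sin_coeff w k \<bullet> v / (v \<bullet> v))))"

text \<open>At k = 0 the vector R^T k vanishes and division by zero yields 0.\<close>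

lemma fourier_multiplier_zero: "fourier_multiplier R w 0 = 0"
  by (simp add: fourier_multiplier_def complex_eq_iff)

lemma fourier_coeff_eq_multiplier:
  fixes R :: "real^'n^'m" and w :: "real^'m \<Rightarrow> real^'n"
  assumes "set_integrable lebesgue unit_cell w" "w \<in> borel_measurable lebesgue" "k \<in> int_lattice"
    and annihilates: "\<And>\<psi>. \<psi> \<in> Cinf_per \<Longrightarrow> (\<And>y. R_divergence R \<psi> y = 0) \<Longrightarrow>
      (LINT y:unit_cell|lebesgue. w y \<bullet> \<psi> y) = 0"
  shows "fourier_coeff w k = (\<chi> l. fourier_multiplier R w k * complex_of_real ((transpose R *v k) $ l))"
proof -
  define v where "v = transpose R *v k"
  have orthogonal: "cos_coeff w k \<bullet> a + sin_coeff w k \<bullet> b = 0" if "a \<bullet> v = 0" "b \<bullet> v = 0" for a b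
  proof -
    have "plane_wave k a b \<in> Cinf_per"
      unfolding Cinf_per_def using smooth_fun_plane_wave periodic1_plane_wave[OF assms(3)] by blast
    moreover have "R_divergence R (plane_wave k a b) y = 0" for y
      using that by (simp add: R_divergence_plane_wave v_def inner_commute)
    ultimately have "(LINT y:unit_cell|lebesgue. w y \<bullet> plane_wave k a b y) = 0"
      by (rule annihilates)
    then show ?thesis
      by (simp add: integral_inner_plane_wave[OF assms(1,2)])
  qed
  have cos_eq: "cos_coeff w k = (cos_coeff w k \<bullet> v / (v \<bullet> v)) *\<^sub>R v"
    by (rule eq_scaled_if_orthogonal_to_perp) (use orthogonal[of _ 0] in simp)
  have cos_par: "cos_coeff w k $ l = (cos_coeff w k \<bullet> v / (v \<bullet> v)) * v $ l" for l
    using arg_cong[OF cos_eq, of "\<lambda>x. x $ l"] by simp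
  have sin_eq: "sin_coeff w k = (sin_coeff w k \<bullet> v / (v \<bullet> v)) *\<^sub>R v"
    by (rule eq_scaled_if_orthogonal_to_perp) (use orthogonal[of 0] in simp)
  have sin_par: "sin_coeff w k $ l = (sin_coeff w k \<bullet> v / (v \<bullet> v)) * v $ l" for l
    using arg_cong[OF sin_eq, of "\<lambda>x. x $ l"] by simp
  show ?thesis
    unfolding vec_eq_iff fourier_coeff_eq_cos_sin_coeff[OF assms(1,2)] v_def[symmetric]
    by (simp add: cos_par sin_par fourier_multiplier_def Let_def v_def complex_eq_iff)
qed

theorem lemma5p4:
  fixes R :: "real^'n^'m" and p :: real and w0 :: "real^'m \<Rightarrow> real^'n"
  assumes "CARD('n) < CARD('m)"
    and "1 < p"
    and "\<forall>k\<in>int_lattice. k \<noteq> 0 \<longrightarrow> transpose R *v k \<noteq> 0"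
    and "w0 \<in> Lp_per p"
    and "\<forall>\<psi>\<in>Cinf_per.
           (\<forall>y. (\<Sum>l\<in>UNIV. \<Sum>\<tau>\<in>UNIV. R $ \<tau> $ l * partial_deriv \<psi> \<tau> y $ l) = 0) \<longrightarrow>
           (LINT y:unit_cell|lebesgue. w0 y \<bullet> \<psi> y) = 0"
  shows "w0 \<in> G_space p R"
proof -
  have w0_integrable: "set_integrable lebesgue unit_cell w0"
    using Lp_per_set_integrable[OF assms(4)] assms(2) by simp
  have w0_measurable: "w0 \<in> borel_measurable lebesgue"
    using assms(4) by (simp add: Lp_per_def)
  have "fourier_coeff w0 k = (\<chi> l. fourier_multiplier R w0 k * complex_of_real ((transpose R *v k) $ l))"
    if "k \<in> int_lattice" for k
    using fourier_coeff_eq_multiplier[OF w0_integrable w0_measurable that] assms(5) by (auto simp: R_divergence_def)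
  then show ?thesis
    unfolding G_space_def using assms(4) fourier_multiplier_zero by blast
qed

end
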